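(* Let $<:$ be the subtyping relation on types described in the context. Then the following hold. (1) For every type $T$: if $\mathtt{HL} <: T$ then $T=\mathtt{HL}$. (2) For every type $T$: if $\mathtt{LL} <: T$ then $T=\mathtt{LL}$ or $T=\mathtt{HL}$. (3) For every type $T$: if $\mathtt{HH} <: T$ then $T=\mathtt{HH}$ or $T=\mathtt{HL}$. (4) For all types $T_1,T_2,T_3$: if $T_1 * T_2 <: T_3$ then $T_3\in\{\mathtt{LL},\mathtt{HL},\mathtt{HH}\}$ or there exist types $T_4,T_5$ with $T_3=T_4*T_5$. (5) For all types $T,T_1,T_2$: if $T <: T_1*T_2$ then there exist $T_1',T_2'$ with $T=T_1'*T_2'$, $T_1'<: T_1$ and $T_2'<: T_2$. (6) For all $T_1,T_2$: if $T_1*T_2 <: \mathtt{LL}$ then $T_1<:\mathtt{LL}$ and $T_2<:\mathtt{LL}$. (7) For all $T_1,T_2$: if $T_1*T_2 <: \mathtt{HH}$ then $T_1<:\mathtt{HH}$ or $T_2<:\mathtt{HH}$. (8) For all $T_1,T_2$ and keys $k$: if $T_1 <: (T_2)_k$ then there exists $T_3<: T_2$ with $T_1=(T_3)_k$. (9) For all $T_1,T_2$ and keys $k$: if $T_1 <: \{T_2\}_k$ then there exists $T_3<: T_2$ with $T_1=\{T_3\}_k$. (10) For all $T_1,T_2$ and keys $k$: if $(T_1)_k <: T_2$ then $T_2=\mathtt{HL}$, or there exists $T_3$ with $T_1<: T_3$ and $T_2=(T_3)_k$. (11) For all $T_1,T_2$ and keys $k$: if $\{T_1\}_k <: T_2$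 then $T_2=\mathtt{HL}$, or there exists $T_3$ with $T_1<: T_3$ and $T_2=\{T_3\}_k$. (12) For every type $T$ and every refinement type $R=\llbracket \tau^{l,a}_m ; \tau^{l',a}_n\rrbracket$: if $T<: R$ then $T=R$. (13) For every type $T$ and every refinement type $R=\llbracket \tau^{l,a}_m ; \tau^{l',a}_n\rrbracket$: if $R<: T$ then $T=\mathtt{HL}$ or $T=R$. (14) For all types $T_1,T_2$: if $T_1<: T_2$ then $T_2=\mathtt{HL}$, or $T_1=T_2$, or neither $T_1$ nor $T_2$ is a union type (i.e. of the form $T'\vee T''$). (15) For all types $T,T'$ and labels $l$: if $T<: \mathrm{key}^l(T')$ then $T=\mathrm{key}^l(T')$. (16) For every type $T$: if $T<:\mathtt{LL}$ then $T$ is a pair type (of the form $T'*T''$), or $T=\mathrm{key}^{\mathtt{LL}}(T')$ for some $T'$, or $T=\mathtt{LL}$. (17) For every type $T$: if $T<:\mathtt{HH}$ then $T$ is a pair type, or $T=\mathrm{key}^{\mathtt{HH}}(T')$ for some $T'$, or $T=\mathtt{HH}$.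
   Context: Security labels are $l\in\{\mathtt{LL},\mathtt{HL},\mathtt{HH}\}$. Fix a set of names and a set of keys. Types are generated by the grammar $T ::= l \mid T*T \mid \mathrm{key}^l(T) \mid (T)_k \mid \{T\}_k \mid \llbracket \tau^{l,a}_m ; \tau^{l',a}_n\rrbracket \mid T\vee T$, where $k$ ranges over keys, $m,n$ over names, $a\in\{1,\infty\}$, and $\tau^{l,a}_n$ is a nonce type; types of the form $T'*T''$ are called pair types, types $\llbracket \tau^{l,a}_m ; \tau^{l',a}_n\rrbracket$ refinement types, and types $T'\vee T''$ union types. The subtyping relation $<:$ is the smallest binary relation on types closed under the rules: $T<: T$; $T<:\mathtt{HL}$; if $T<: T'$ and $T'<: T''$ then $T<: T''$; $\mathtt{LL}*\mathtt{LL}<:\mathtt{LL}$; if $T_1<: T_1'$ and $T_2<: T_2'$ then $T_1*T_2<: T_1'*T_2'$; $\mathtt{HH}*T<:\mathtt{HH}$; $T*\mathtt{HH}<:\mathtt{HH}$; $\mathrm{key}^l(T)<: l$; if $T<: T'$ then $(T)_k<:(T')_k$; if $T<: T'$ then $\{T\}_k<:\{T'\}_k$. *)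

theory Defs
  imports Main
begin

datatype label = LL | HL | HH

datatype affinity = One | Inf

text \<open>Types over a set of names 'n and keys 'k. The refinement type
  [[ tau^{l,a}_m ; tau^{l',a}_n ]] is represented as Refine l a m l' n
  (both nonce types share the affinity a).\<close>
datatype ('n, 'k) ty =
    Lab label
  | Pair "('n, 'k) ty" "('n, 'k) ty"
  | Key label "('n, 'k) ty"
  | SymEnc "('n, 'k) ty" 'k
  | AsymEnc "('n, 'k) ty" 'k
  | Refine label affinity 'n label 'n
  | Union "('n, 'k) ty" "('n, 'k) ty"

inductive subtype :: "('n, 'k) ty \<Rightarrow> ('n, 'k) ty \<Rightarrow> bool" (infix "<:" 50) where
  refl: "T <: T"
| top: "T <: Lab HL"
| trans: "T <: T' \<Longrightarrow> T' <: T'' \<Longrightarrow> T <: T''"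
| pair_LL: "Pair (Lab LL) (Lab LL) <: Lab LL"
| pair: "T1 <: T1' \<Longrightarrow> T2 <: T2' \<Longrightarrow> Pair T1 T2 <: Pair T1' T2'"
| pair_HH1: "Pair (Lab HH) T <: Lab HH"
| pair_HH2: "Pair T (Lab HH) <: Lab HH"
| key: "Key l T <: Lab l"
| symenc: "T <: T' \<Longrightarrow> SymEnc T k <: SymEnc T' k"
| asymenc: "T <: T' \<Longrightarrow> AsymEnc T k <: AsymEnc T' k"

definition is_pair :: "('n, 'k) ty \<Rightarrow> bool" where
  "is_pair T \<longleftrightarrow> (\<exists>T1 T2. T = Pair T1 T2)"

definition is_union :: "('n, 'k) ty \<Rightarrow> bool" where
  "is_union T \<longleftrightarrow> (\<exists>T1 T2. T = Union T1 T2)"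

end

theory Submission
  imports Defs
begin

(* The declarative relation cannot be inverted directly because of its transitivity rule.
   It coincides, however, with a syntax-directed relation in which transitivity is built into
   the rules for pairs below a label, so that the last rule of a derivation of S <: T is
   determined by the shapes of S and T. Each clause of the theorem is then a rule inversion. *)

inductive sub_alg :: "('n, 'k) ty \<Rightarrow> ('n, 'k) ty \<Rightarrow> bool" (infix "<:\<^sub>a" 50) where
  alg_refl: "T <:\<^sub>a T"
| alg_top: "T <:\<^sub>a Lab HL"
| alg_pair_LL: "T1 <:\<^sub>a Lab LL \<Longrightarrow> T2 <:\<^sub>a Lab LL \<Longrightarrow> Pair T1 T2 <:\<^sub>a Lab LL"
| alg_pair_HH1: "T1 <:\<^sub>a Lab HH \<Longrightarrow> Pair T1 T2 <:\<^sub>a Lab HH"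
| alg_pair_HH2: "T2 <:\<^sub>a Lab HH \<Longrightarrow> Pair T1 T2 <:\<^sub>a Lab HH"
| alg_key: "Key l T <:\<^sub>a Lab l"
| alg_pair: "T1 <:\<^sub>a T1' \<Longrightarrow> T2 <:\<^sub>a T2' \<Longrightarrow> Pair T1 T2 <:\<^sub>a Pair T1' T2'"
| alg_symenc: "T <:\<^sub>a T' \<Longrightarrow> SymEnc T k <:\<^sub>a SymEnc T' k"
| alg_asymenc: "T <:\<^sub>a T' \<Longrightarrow> AsymEnc T k <:\<^sub>a AsymEnc T' k"

lemma sub_alg_trans: "T <:\<^sub>a T' \<Longrightarrow> T' <:\<^sub>a T'' \<Longrightarrow> T <:\<^sub>a T''"
proof (induction T T' arbitrary: T'' rule: sub_alg.induct)
  case (alg_pair T1 T1' T2 T2')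
  from alg_pair.prems show ?case
    by (cases rule: sub_alg.cases) (auto intro: sub_alg.intros alg_pair.IH)
next
  case (alg_symenc T T' k)
  from alg_symenc.prems show ?case
    by (cases rule: sub_alg.cases) (auto intro: sub_alg.intros alg_symenc.IH)
next
  case (alg_asymenc T T' k)
  from alg_asymenc.prems show ?case
    by (cases rule: sub_alg.cases) (auto intro: sub_alg.intros alg_asymenc.IH)
qed (erule sub_alg.cases; auto intro: sub_alg.intros)+

lemma sub_alg_imp_subtype: "T <:\<^sub>a T' \<Longrightarrow> T <: T'"
proof (induction rule: sub_alg.induct)
  case (alg_pair_LL T1 T2)
  then show ?case
    by (meson subtype.pair subtype.pair_LL subtype.trans)
next
  case (alg_pair_HH1 T1 T2)
  then show ?case
    by (meson subtype.pair subtype.refl subtype.pair_HH1 subtype.trans)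
next
  case (alg_pair_HH2 T2 T1)
  then show ?case
    by (meson subtype.pair subtype.refl subtype.pair_HH2 subtype.trans)
qed (auto intro: subtype.intros)

lemma subtype_imp_sub_alg: "T <: T' \<Longrightarrow> T <:\<^sub>a T'"
  by (induction rule: subtype.induct) (auto intro: sub_alg.intros sub_alg_trans)

lemma subtype_iff_sub_alg: "T <: T' \<longleftrightarrow> T <:\<^sub>a T'"
  using sub_alg_imp_subtype subtype_imp_sub_alg by blast

theorem lemmaB1:
  fixes T T' T1 T2 T3 :: "('n, 'k) ty" and k :: 'k and l l' la :: label
    and a :: affinity and m n :: 'n
  shows
   "(Lab HL <: T \<longrightarrow> T = Lab HL)
  \<and> (Lab LL <: T \<longrightarrow> T = Lab LL \<or> T = Lab HL)
  \<and> (Lab HH <: T \<longrightarrow> T = Lab HH \<or> T = Lab HL)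
  \<and> (Pair T1 T2 <: T3 \<longrightarrow>
        T3 \<in> {Lab LL, Lab HL, Lab HH} \<or> (\<exists>T4 T5. T3 = Pair T4 T5))
  \<and> (T <: Pair T1 T2 \<longrightarrow>
        (\<exists>T1' T2'. T = Pair T1' T2' \<and> T1' <: T1 \<and> T2' <: T2))
  \<and> (Pair T1 T2 <: Lab LL \<longrightarrow> T1 <: Lab LL \<and> T2 <: Lab LL)
  \<and> (Pair T1 T2 <: Lab HH \<longrightarrow> T1 <: Lab HH \<or> T2 <: Lab HH)
  \<and> (T1 <: SymEnc T2 k \<longrightarrow> (\<exists>T3'. T3' <: T2 \<and> T1 = SymEnc T3' k))
  \<and> (T1 <: AsymEnc T2 k \<longrightarrow> (\<exists>T3'. T3' <: T2 \<and> T1 = AsymEnc T3' k))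
  \<and> (SymEnc T1 k <: T2 \<longrightarrow>
        T2 = Lab HL \<or> (\<exists>T3'. T1 <: T3' \<and> T2 = SymEnc T3' k))
  \<and> (AsymEnc T1 k <: T2 \<longrightarrow>
        T2 = Lab HL \<or> (\<exists>T3'. T1 <: T3' \<and> T2 = AsymEnc T3' k))
  \<and> (T <: Refine l a m l' n \<longrightarrow> T = Refine l a m l' n)
  \<and> (Refine l a m l' n <: T \<longrightarrow> T = Lab HL \<or> T = Refine l a m l' n)
  \<and> (T1 <: T2 \<longrightarrow> T2 = Lab HL \<or> T1 = T2 \<or> (\<not> is_union T1 \<and> \<not> is_union T2))
  \<and> (T <: Key la T' \<longrightarrow> T = Key la T')
  \<and> (T <: Lab LL \<longrightarrow> is_pair T \<or> (\<exists>T''. T = Key LL T'') \<or> T = Lab LL)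
  \<and> (T <: Lab HH \<longrightarrow> is_pair T \<or> (\<exists>T''. T = Key HH T'') \<or> T = Lab HH)"
  unfolding subtype_iff_sub_alg is_pair_def is_union_def
  by (intro conjI impI; erule sub_alg.cases; auto intro: sub_alg.intros)

end
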